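(* Let $\mathcal N$, $I_{\mathcal N}$, $S_{i,j}$ and $K_{\mathcal N}$ be as in the context. Then there exists $(t_{i,j})_{(i,j)\in I_{\mathcal N}}\in K_{\mathcal N}$ with $\sum_{(i,j)\in I_{\mathcal N}}t_{i,j}=\#\bigcup_{(i,j)\in I_{\mathcal N}}S_{i,j}$.
   Context: Fix positive integers $n_0^{(1)},n_0^{(2)},d_0,f_1^{(1)},f_1^{(2)},s_1$ with $f_1^{(r)}\le n_0^{(r)}$, and let $n_1^{(r)}=\lfloor (n_0^{(r)}-f_1^{(r)})/s_1\rfloor+1$ for $r=1,2$. Let $I_{\mathcal N}=\{(i,j):1\le i\le n_1^{(1)},1\le j\le n_1^{(2)}\}$, and for $(i,j)\in I_{\mathcal N}$ let $S_{i,j}=\{(a+(i-1)s_1,\ b+(j-1)s_1,\ c):1\le a\le f_1^{(1)},1\le b\le f_1^{(2)},1\le c\le d_0\}$ (the indices of input neurons used to compute the pre-activations at spatial position $(i,j)$ of a one-layer CNN with these filter sizes and stride). Let $K_{\mathcal N}=\{(t_{i,j})_{(i,j)\in I_{\mathcal N}}: t_{i,j}\in\mathbb N,\ \sum_{(i,j)\in J}t_{i,j}\le \#\bigcup_{(i,j)\in J}S_{i,j}\text{ for all } J\subseteq I_{\mathcal N}\}$. *)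

theory Defs
  imports Main
begin

text \<open>Output spatial size: n1 = floor((n0 - f1)/s1) + 1 (with f1 \<le> n0 assumed, so nat division is exact floor).\<close>
definition out_size :: "nat \<Rightarrow> nat \<Rightarrow> nat \<Rightarrow> nat" where
  "out_size n0 f1 s1 = (n0 - f1) div s1 + 1"

definition index_set :: "nat \<Rightarrow> nat \<Rightarrow> nat \<Rightarrow> nat \<Rightarrow> nat \<Rightarrow> (nat \<times> nat) set" where
  "index_set n01 n02 f11 f12 s1 =
     {(i, j). 1 \<le> i \<and> i \<le> out_size n01 f11 s1 \<and> 1 \<le> j \<and> j \<le> out_size n02 f12 s1}"

definition receptive :: "nat \<Rightarrow> nat \<Rightarrow> nat \<Rightarrow> nat \<Rightarrow> nat \<Rightarrow> nat \<Rightarrow> (nat \<times> nat \<times> nat) set" where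
  "receptive d0 f11 f12 s1 i j =
     {(a + (i - 1) * s1, b + (j - 1) * s1, c) | a b c.
        1 \<le> a \<and> a \<le> f11 \<and> 1 \<le> b \<and> b \<le> f12 \<and> 1 \<le> c \<and> c \<le> d0}"

text \<open>K_N: families t indexed by I_N (values outside I_N are irrelevant; represented as
  functions nat \<times> nat \<Rightarrow> nat) such that every subfamily J satisfies the Hall-type bound.\<close>
definition K_set :: "nat \<Rightarrow> nat \<Rightarrow> nat \<Rightarrow> nat \<Rightarrow> nat \<Rightarrow> nat \<Rightarrow> ((nat \<times> nat) \<Rightarrow> nat) set" where
  "K_set n01 n02 d0 f11 f12 s1 =
     {t. \<forall>J \<subseteq> index_set n01 n02 f11 f12 s1.
           (\<Sum>ij\<in>J. t ij) \<le> card (\<Union>ij\<in>J. receptive d0 f11 f12 s1 (fst ij) (snd ij))}"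

end

theory Submission
  imports Defs
begin

text \<open>Assign every point of \<open>\<Union>i\<in>I. S i\<close> to one set \<open>S i\<close> containing it and let \<open>t i\<close> count
  the points assigned to \<open>i\<close>. For \<open>J \<subseteq> I\<close> the sum of \<open>t\<close> over \<open>J\<close> counts the points assigned
  into \<open>J\<close>, all of which lie in \<open>\<Union>i\<in>J. S i\<close>; for \<open>J = I\<close> every point is counted exactly once.\<close>

lemma sum_card_fibres:
  assumes "finite U" "finite J"
  shows "(\<Sum>i\<in>J. card {x\<in>U. g x = i}) = card {x\<in>U. g x \<in> J}"
proof -
  have "(\<Sum>i\<in>J. card {x\<in>U. g x = i}) = card (\<Union>i\<in>J. {x\<in>U. g x = i})"
    by (rule card_UN_disjoint[symmetric]) (use assms in auto)
  also have "(\<Union>i\<in>J. {x\<in>U. g x = i}) = {x\<in>U. g x \<in> J}"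
    by auto
  finally show ?thesis .
qed

lemma exists_weights_Hall_bound_tight:
  fixes S :: "'i \<Rightarrow> 'a set"
  assumes fin_I: "finite I" and fin_S: "\<And>i. i \<in> I \<Longrightarrow> finite (S i)"
  shows "\<exists>t. (\<forall>J\<subseteq>I. (\<Sum>i\<in>J. t i) \<le> card (\<Union>i\<in>J. S i))
             \<and> (\<Sum>i\<in>I. t i) = card (\<Union>i\<in>I. S i)"
proof -
  define U where "U = (\<Union>i\<in>I. S i)"
  have fin_U: "finite U"
    using fin_I fin_S unfolding U_def by blast
  obtain g where g: "\<And>x. x \<in> U \<Longrightarrow> g x \<in> I \<and> x \<in> S (g x)"
    using bchoice[of U "\<lambda>x i. i \<in> I \<and> x \<in> S i"] unfolding U_def by blast
  define t where "t i = card {x\<in>U. g x = i}" for i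
  have sum_t: "(\<Sum>i\<in>J. t i) = card {x\<in>U. g x \<in> J}" if "J \<subseteq> I" for J
    unfolding t_def using sum_card_fibres fin_U finite_subset[OF that fin_I] by blast
  have "(\<Sum>i\<in>J. t i) \<le> card (\<Union>i\<in>J. S i)" if J: "J \<subseteq> I" for J
  proof -
    have "{x\<in>U. g x \<in> J} \<subseteq> (\<Union>i\<in>J. S i)"
      using g by blast
    moreover have "finite (\<Union>i\<in>J. S i)"
      using J fin_I fin_S finite_subset by blast
    ultimately show ?thesis
      using sum_t[OF J] by (simp add: card_mono)
  qed
  moreover have "(\<Sum>i\<in>I. t i) = card (\<Union>i\<in>I. S i)"
  proof -
    have "{x\<in>U. g x \<in> I} = U"
      using g by blast
    then show ?thesis
      using sum_t[of I] unfolding U_def by simp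
  qed
  ultimately show ?thesis
    by blast
qed

lemma finite_receptive: "finite (receptive d0 f11 f12 s1 i j)"
proof -
  have "receptive d0 f11 f12 s1 i j \<subseteq>
     (\<lambda>(a, b, c). (a + (i - 1) * s1, b + (j - 1) * s1, c)) ` ({1..f11} \<times> {1..f12} \<times> {1..d0})"
    unfolding receptive_def by force
  then show ?thesis
    by (rule finite_subset) simp
qed

lemma finite_index_set: "finite (index_set n01 n02 f11 f12 s1)"
proof -
  have "index_set n01 n02 f11 f12 s1 \<subseteq> {1..out_size n01 f11 s1} \<times> {1..out_size n02 f12 s1}"
    unfolding index_set_def by auto
  then show ?thesis
    by (rule finite_subset) simp
qed

theorem lemma3:
  fixes n01 n02 d0 f11 f12 s1 :: nat
  assumes "0 < n01" "0 < n02" "0 < d0" "0 < f11" "0 < f12" "0 < s1"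
    and "f11 \<le> n01" "f12 \<le> n02"
  shows "\<exists>t \<in> K_set n01 n02 d0 f11 f12 s1.
           (\<Sum>ij\<in>index_set n01 n02 f11 f12 s1. t ij)
             = card (\<Union>ij\<in>index_set n01 n02 f11 f12 s1. receptive d0 f11 f12 s1 (fst ij) (snd ij))"
  using exists_weights_Hall_bound_tight[where S = "\<lambda>ij. receptive d0 f11 f12 s1 (fst ij) (snd ij)",
      OF finite_index_set finite_receptive]
  unfolding K_set_def by blast

end
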